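(* Let $d,e\ge2$ be integers. There exists a quasi-symmetric homeomorphism $\phi:\mathbb S^1\cong\mathbb R/\mathbb Z\to\mathbb S^1$ that maps the set of $d$-adic rationals $\{p/d^n: p,n\in\mathbb Z_{\ge0}\}$ (mod $1$) onto the set of $e$-adic rationals $\{q/e^m: q,m\in\mathbb Z_{\ge0}\}$ (mod $1$). *)

theory Defs
  imports "HOL-Analysis.Analysis"
begin

text \<open>The circle S^1 = R/Z, realised as the unit circle in the complex plane via
  x mod 1 corresponds to cis (2 pi x).  The chordal metric is bi-Lipschitz equivalent
  to the quotient metric of R/Z, so quasi-symmetry does not depend on this choice.\<close>

definition circle :: "complex set" where
  "circle = sphere 0 1"

definition adic_points :: "nat \<Rightarrow> complex set" where
  "adic_points d = {cis (2 * pi * (real p / real d ^ n)) | p n :: nat. True}"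

definition control_function :: "(real \<Rightarrow> real) \<Rightarrow> bool" where
  "control_function \<eta> \<longleftrightarrow> (\<exists>\<eta>'. homeomorphism {0..} {0..} \<eta> \<eta>')"

definition quasisymmetric_on :: "'a::metric_space set \<Rightarrow> ('a \<Rightarrow> 'b::metric_space) \<Rightarrow> bool" where
  "quasisymmetric_on S f \<longleftrightarrow>
     (\<exists>\<eta>. control_function \<eta> \<and>
        (\<forall>x\<in>S. \<forall>a\<in>S. \<forall>b\<in>S. \<forall>t\<ge>0.
            dist x a \<le> t * dist x b \<longrightarrow> dist (f x) (f a) \<le> \<eta> t * dist (f x) (f b)))"

end

theory Submission
  imports Defs
begin

(*
  The d-adic and the e-adic fractions in [0, 1] are countable dense sets containing 0 and 1.
  A back-and-forth construction matches them by a bijection all of whose chord slopes lie strictly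
  between 1/2 and 2: a finite matching with this property always extends by one more point, because
  linear interpolation in the gap around the new point is admissible, admissibility is an open
  condition, and the other set is dense.  The matching extends by continuity to an increasing
  bi-Lipschitz homeomorphism h of [0, 1] fixing 0 and 1, so h descends to the circle R/Z.  Chord
  length on the circle is comparable to arc length, hence the induced map is bi-Lipschitz, and
  therefore quasi-symmetric, and it carries the d-adic points onto the e-adic points.
*)

section \<open>Finite matchings with pinched chord slopes\<close>

text \<open>Strict bounds make the admissible positions of a new point an open set.  Requiring them
  whenever \<open>a < b \<or> a' < b'\<close> makes the notion invariant under swapping coordinates and forces
  \<open>P\<close> to be the graph of an injective increasing function.\<close>

definition bilipschitz_graph :: "real \<Rightarrow> (real \<times> real) set \<Rightarrow> bool" where
  "bilipschitz_graph K P \<longleftrightarrow>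
     (\<forall>(a, a') \<in> P. \<forall>(b, b') \<in> P. a < b \<or> a' < b' \<longrightarrow> (b - a) / K < b' - a' \<and> b' - a' < K * (b - a))"

lemma bilipschitz_graphI:
  assumes "K > 0"
    and slope: "\<And>a a' b b'. (a, a') \<in> P \<Longrightarrow> (b, b') \<in> P \<Longrightarrow> a < b \<Longrightarrow>
                  (b - a) / K < b' - a' \<and> b' - a' < K * (b - a)"
    and functional: "\<And>a a' b'. (a, a') \<in> P \<Longrightarrow> (a, b') \<in> P \<Longrightarrow> a' = b'"
  shows "bilipschitz_graph K P"
  unfolding bilipschitz_graph_def
proof (clarify)
  fix a a' b b' assume ab: "(a, a') \<in> P" "(b, b') \<in> P" "a < b \<or> a' < b'"
  show "(b - a) / K < b' - a' \<and> b' - a' < K * (b - a)"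
  proof (cases "a < b")
    case False
    with ab(3) have "a' < b'" by simp
    moreover have "a \<noteq> b" using functional[of a a' b'] ab \<open>a' < b'\<close> by auto
    ultimately have "b < a" "a' < b'" using False by auto
    moreover from \<open>b < a\<close> \<open>K > 0\<close> have "0 < (a - b) / K" by simp
    ultimately have False using slope[OF ab(2,1)] by linarith
    then show ?thesis ..
  qed (use slope ab in auto)
qed

lemma bilipschitz_graphD:
  assumes "bilipschitz_graph K P" "(a, a') \<in> P" "(b, b') \<in> P" "a \<le> b"
  shows "(b - a) / K \<le> b' - a'" "b' - a' \<le> K * (b - a)"
proof -
  have "(b - a) / K \<le> b' - a' \<and> b' - a' \<le> K * (b - a)"
  proof (cases "a < b")
    case False
    then have "a = b" using assms(4) by simp
    have "\<not> a' < b'" "\<not> b' < a'"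
      using assms(1-3) \<open>a = b\<close> unfolding bilipschitz_graph_def by fastforce+
    then have "a' = b'" by simp
    then show ?thesis using \<open>a = b\<close> by simp
  next
    case True
    then have "(b - a) / K < b' - a' \<and> b' - a' < K * (b - a)"
      using assms(1-3) unfolding bilipschitz_graph_def by fastforce
    then show ?thesis by auto
  qed
  then show "(b - a) / K \<le> b' - a'" "b' - a' \<le> K * (b - a)" by auto
qed

lemma bilipschitz_graph_swap:
  assumes "K > 0"
  shows "bilipschitz_graph K (prod.swap ` P) \<longleftrightarrow> bilipschitz_graph K P"
proof -
  have "(b' - a') / K < b - a \<and> b - a < K * (b' - a') \<longleftrightarrow> (b - a) / K < b' - a' \<and> b' - a' < K * (b - a)"
    for a a' b b' :: real
    using assms by (auto simp: field_simps)
  then show ?thesis unfolding bilipschitz_graph_def by (auto simp: disj_commute)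
qed

definition slope_window :: "real \<Rightarrow> real \<Rightarrow> real \<times> real \<Rightarrow> real set" where
  "slope_window K x q = (if fst q < x
      then {snd q + (x - fst q) / K <..< snd q + K * (x - fst q)}
      else {snd q - K * (fst q - x) <..< snd q - (fst q - x) / K})"

lemma open_slope_window: "open (slope_window K x q)"
  by (simp add: slope_window_def)

lemma bilipschitz_graph_insertI:
  assumes "K > 0" and P: "bilipschitz_graph K P" and "x \<notin> fst ` P"
    and y: "y \<in> (\<Inter>q\<in>P. slope_window K x q)"
  shows "bilipschitz_graph K (insert (x, y) P)"
proof (rule bilipschitz_graphI[OF \<open>K > 0\<close>])
  fix c c' e e' assume "(c, c') \<in> insert (x, y) P" "(e, e') \<in> insert (x, y) P" "c < e"
  then consider "(c, c') \<in> P" "(e, e') \<in> P" | "(c, c') \<in> P" "e = x" "e' = y"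
    | "c = x" "c' = y" "(e, e') \<in> P"
    by auto
  then show "(e - c) / K < e' - c' \<and> e' - c' < K * (e - c)"
  proof cases
    case 1
    then show ?thesis using P \<open>c < e\<close> unfolding bilipschitz_graph_def by fastforce
  next
    case 2
    then have "y \<in> slope_window K x (c, c')" using y by blast
    then show ?thesis using 2 \<open>c < e\<close> by (simp add: slope_window_def)
  next
    case 3
    then have "y \<in> slope_window K x (e, e')" using y by blast
    then show ?thesis using 3 \<open>c < e\<close> by (simp add: slope_window_def)
  qed
next
  fix c c' e' assume "(c, c') \<in> insert (x, y) P" "(c, e') \<in> insert (x, y) P"
  then show "c' = e'"
    using \<open>x \<notin> fst ` P\<close> bilipschitz_graphD[OF P, of c c' c e'] by (force simp: image_iff)
qed

text \<open>Every chord slope from the interpolated point is a mediant of the slope of the gap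
  \<open>(a, b)\<close> and of an old chord slope, so it stays strictly between \<open>1 / K\<close> and \<open>K\<close>.\<close>

lemma interpolant_in_slope_windows:
  assumes "K > 0" and P: "bilipschitz_graph K P" and aa': "(a, a') \<in> P" and bb': "(b, b') \<in> P"
    and "a < x" "x < b" and gap: "\<And>p p'. (p, p') \<in> P \<Longrightarrow> p \<le> a \<or> b \<le> p"
  shows "a' + (b' - a') / (b - a) * (x - a) \<in> (\<Inter>q\<in>P. slope_window K x q)"
proof -
  define s where "s = (b' - a') / (b - a)"
  have "(b - a) / K < b' - a'" "b' - a' < K * (b - a)"
    using P aa' bb' \<open>a < x\<close> \<open>x < b\<close> unfolding bilipschitz_graph_def by fastforce+
  then have "1 / K < s" "s < K"
    using \<open>a < x\<close> \<open>x < b\<close> \<open>K > 0\<close> by (simp_all add: s_def field_simps)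
  then have s_left: "(x - a) / K < s * (x - a)" "s * (x - a) < K * (x - a)"
    and s_right: "(b - x) / K < s * (b - x)" "s * (b - x) < K * (b - x)"
    using \<open>a < x\<close> \<open>x < b\<close> mult_strict_right_mono[of "1 / K" s] mult_strict_right_mono[of s K]
    by simp_all
  have right: "a' + s * (x - a) = b' - s * (b - x)"
    using \<open>a < x\<close> \<open>x < b\<close> by (simp add: s_def field_simps)
  have "a' + s * (x - a) \<in> slope_window K x (p, p')" if pp': "(p, p') \<in> P" for p p'
  proof (cases "p < x")
    case True
    then have "p \<le> a" using gap[OF pp'] \<open>x < b\<close> by linarith
    then have "(a - p) / K \<le> a' - p'" "a' - p' \<le> K * (a - p)"
      using bilipschitz_graphD[OF P pp' aa'] by auto
    then show ?thesis
      using True s_left by (simp add: slope_window_def diff_divide_distrib algebra_simps)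
  next
    case False
    then have "b \<le> p" using gap[OF pp'] \<open>a < x\<close> by linarith
    then have "(p - b) / K \<le> p' - b'" "p' - b' \<le> K * (p - b)"
      using bilipschitz_graphD[OF P bb' pp'] by auto
    then show ?thesis
      using False s_right unfolding right by (simp add: slope_window_def diff_divide_distrib algebra_simps)
  qed
  then have "a' + s * (x - a) \<in> slope_window K x q" if "q \<in> P" for q
    using that by (cases q) blast
  then show ?thesis unfolding s_def by blast
qed

lemma finite_bracketing:
  fixes S :: "'a::linorder set"
  assumes "finite S" "l \<in> S" "u \<in> S" "l < x" "x < u"
  obtains a b where "a \<in> S" "b \<in> S" "a < x" "x < b"
    "\<And>p. p \<in> S \<Longrightarrow> p < x \<Longrightarrow> p \<le> a" "\<And>p. p \<in> S \<Longrightarrow> x < p \<Longrightarrow> b \<le> p"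
proof
  let ?L = "{p \<in> S. p < x}" and ?U = "{p \<in> S. x < p}"
  have "finite ?L" "?L \<noteq> {}" "finite ?U" "?U \<noteq> {}"
    using assms by auto
  then show "Max ?L \<in> S" "Min ?U \<in> S" "Max ?L < x" "x < Min ?U"
    using Max_in[of ?L] Min_in[of ?U] by auto
  show "p \<le> Max ?L" if "p \<in> S" "p < x" for p
    using that \<open>finite ?L\<close> by (intro Max_ge) auto
  show "Min ?U \<le> p" if "p \<in> S" "x < p" for p
    using that \<open>finite ?U\<close> by (intro Min_le) auto
qed

lemma bilipschitz_graph_insert:
  fixes E :: "real set"
  assumes "K > 0" "finite P" and P: "bilipschitz_graph K P" and P01: "(0, 0) \<in> P" "(1, 1) \<in> P"
    and x: "0 < x" "x < 1" "x \<notin> fst ` P" and E: "{0..1} \<subseteq> closure E"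
  shows "\<exists>y\<in>E. bilipschitz_graph K (insert (x, y) P)"
proof -
  have "0 \<in> fst ` P" "1 \<in> fst ` P"
    by (rule image_eqI[OF _ P01(1)] image_eqI[OF _ P01(2)]; simp)+
  then obtain a b where "a \<in> fst ` P" "b \<in> fst ` P" "a < x" "x < b"
    and below: "\<And>p. p \<in> fst ` P \<Longrightarrow> p < x \<Longrightarrow> p \<le> a"
    and above: "\<And>p. p \<in> fst ` P \<Longrightarrow> x < p \<Longrightarrow> b \<le> p"
    using finite_bracketing[of "fst ` P" 0 1 x] \<open>finite P\<close> x(1,2) by blast
  then obtain a' b' where aa': "(a, a') \<in> P" and bb': "(b, b') \<in> P" by force
  have gap: "p \<le> a \<or> b \<le> p" if "(p, p') \<in> P" for p p'
  proof -
    have "p \<in> fst ` P" using that by (simp add: rev_image_eqI)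
    with x(3) have "p \<noteq> x" by blast
    with below above \<open>p \<in> fst ` P\<close> show ?thesis by (meson linorder_neqE_linordered_idom)
  qed
  define V where "V = (\<Inter>q\<in>P. slope_window K x q)"
  define y0 where "y0 = a' + (b' - a') / (b - a) * (x - a)"
  have "y0 \<in> V"
    unfolding V_def y0_def
    by (rule interpolant_in_slope_windows[OF \<open>K > 0\<close> P aa' bb' \<open>a < x\<close> \<open>x < b\<close>]) (rule gap)
  have "0 \<le> a" "b \<le> 1"
    using below \<open>0 \<in> fst ` P\<close> above \<open>1 \<in> fst ` P\<close> x(1,2) by auto
  then have "0 \<le> a / K" "0 \<le> (1 - b) / K"
    using \<open>K > 0\<close> by simp_all
  then have "0 \<le> a'" "b' \<le> 1"
    using bilipschitz_graphD(1)[OF P P01(1) aa' \<open>0 \<le> a\<close>] bilipschitz_graphD(1)[OF P bb' P01(2) \<open>b \<le> 1\<close>]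
    by simp_all
  moreover have "y0 \<in> slope_window K x (a, a')" "y0 \<in> slope_window K x (b, b')"
    using \<open>y0 \<in> V\<close> aa' bb' unfolding V_def by blast+
  moreover have "0 < (x - a) / K" "0 < (b - x) / K"
    using \<open>a < x\<close> \<open>x < b\<close> \<open>K > 0\<close> by simp_all
  ultimately have "y0 \<in> {0..1}"
    using \<open>a < x\<close> \<open>x < b\<close> by (simp add: slope_window_def)
  moreover have "open V"
    unfolding V_def using \<open>finite P\<close> by (intro open_INT ballI open_slope_window)
  ultimately obtain y where "y \<in> E" "y \<in> V"
    using \<open>y0 \<in> V\<close> E open_Int_closure_eq_empty[of V E] by blast
  then show ?thesis
    using bilipschitz_graph_insertI[OF \<open>K > 0\<close> P x(3)] unfolding V_def by blast
qed

lemma back_and_forth_step: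
  assumes forth: "\<And>P x. good P \<Longrightarrow> P \<subseteq> D \<times> E \<Longrightarrow> x \<in> D \<Longrightarrow> \<exists>y\<in>E. good (insert (x, y) P)"
    and backward: "\<And>P y. good P \<Longrightarrow> P \<subseteq> D \<times> E \<Longrightarrow> y \<in> E \<Longrightarrow> \<exists>x\<in>D. good (insert (x, y) P)"
    and P: "good P" "P \<subseteq> D \<times> E" and "x \<in> D" "y \<in> E"
  obtains Q where "good Q" "Q \<subseteq> D \<times> E" "P \<subseteq> Q" "x \<in> fst ` Q" "y \<in> snd ` Q"
proof -
  obtain y' where "y' \<in> E" and good1: "good (insert (x, y') P)"
    using forth[OF P \<open>x \<in> D\<close>] by blast
  moreover have "insert (x, y') P \<subseteq> D \<times> E"
    using P \<open>x \<in> D\<close> \<open>y' \<in> E\<close> by blast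
  ultimately obtain x' where "x' \<in> D" and "good (insert (x', y) (insert (x, y') P))"
    using backward[OF good1 _ \<open>y \<in> E\<close>] by blast
  moreover have "insert (x', y) (insert (x, y') P) \<subseteq> D \<times> E"
    using P \<open>x \<in> D\<close> \<open>y \<in> E\<close> \<open>x' \<in> D\<close> \<open>y' \<in> E\<close> by blast
  ultimately show ?thesis
    by (intro that[of "insert (x', y) (insert (x, y') P)"]) (force intro: rev_image_eqI)+
qed

lemma back_and_forth:
  assumes "countable D" "countable E" "D \<noteq> {}" "E \<noteq> {}" "good P0" "P0 \<subseteq> D \<times> E"
    and forth: "\<And>P x. good P \<Longrightarrow> P \<subseteq> D \<times> E \<Longrightarrow> x \<in> D \<Longrightarrow> \<exists>y\<in>E. good (insert (x, y) P)"
    and backward: "\<And>P y. good P \<Longrightarrow> P \<subseteq> D \<times> E \<Longrightarrow> y \<in> E \<Longrightarrow> \<exists>x\<in>D. good (insert (x, y) P)"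
  obtains Ps where "\<And>n. good (Ps n)" "Ps 0 = P0" "incseq Ps"
    "fst ` (\<Union>n. Ps n) = D" "snd ` (\<Union>n. Ps n) = E"
proof -
  define x where "x n = from_nat_into D n" for n
  define y where "y n = from_nat_into E n" for n
  have "x n \<in> D" "y n \<in> E" for n
    using \<open>D \<noteq> {}\<close> \<open>E \<noteq> {}\<close> by (simp_all add: x_def y_def from_nat_into)
  have "\<exists>Ps. \<forall>n. (good (Ps n) \<and> Ps n \<subseteq> D \<times> E \<and> (n = 0 \<longrightarrow> Ps n = P0)) \<and>
      Ps n \<subseteq> Ps (Suc n) \<and> x n \<in> fst ` Ps (Suc n) \<and> y n \<in> snd ` Ps (Suc n)"
  proof (rule dependent_nat_choice)
    show "\<exists>P. good P \<and> P \<subseteq> D \<times> E \<and> (0 = 0 \<longrightarrow> P = P0)"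
      using assms(5,6) by blast
  next
    fix P and n :: nat assume "good P \<and> P \<subseteq> D \<times> E \<and> (n = 0 \<longrightarrow> P = P0)"
    then obtain Q where "good Q" "Q \<subseteq> D \<times> E" "P \<subseteq> Q" "x n \<in> fst ` Q" "y n \<in> snd ` Q"
      using back_and_forth_step[OF forth backward _ _ \<open>x n \<in> D\<close> \<open>y n \<in> E\<close>] by blast
    then show "\<exists>Q. (good Q \<and> Q \<subseteq> D \<times> E \<and> (Suc n = 0 \<longrightarrow> Q = P0)) \<and>
        P \<subseteq> Q \<and> x n \<in> fst ` Q \<and> y n \<in> snd ` Q"
      by blast
  qed
  then obtain Ps where Ps: "\<And>n. good (Ps n)" "\<And>n. Ps n \<subseteq> D \<times> E" "Ps 0 = P0"
    and Ps_Suc: "\<And>n. Ps n \<subseteq> Ps (Suc n)" "\<And>n. x n \<in> fst ` Ps (Suc n)" "\<And>n. y n \<in> snd ` Ps (Suc n)"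
    by metis
  have "D \<subseteq> fst ` (\<Union>n. Ps n)"
  proof
    fix a assume "a \<in> D"
    then obtain n where "x n = a" using from_nat_into_surj[OF \<open>countable D\<close>] x_def by blast
    then show "a \<in> fst ` (\<Union>n. Ps n)" using Ps_Suc(2)[of n] by blast
  qed
  moreover have "E \<subseteq> snd ` (\<Union>n. Ps n)"
  proof
    fix b assume "b \<in> E"
    then obtain n where "y n = b" using from_nat_into_surj[OF \<open>countable E\<close>] y_def by blast
    then show "b \<in> snd ` (\<Union>n. Ps n)" using Ps_Suc(3)[of n] by blast
  qed
  moreover have "(\<Union>n. Ps n) \<subseteq> D \<times> E" using Ps(2) by blast
  moreover have "incseq Ps" using Ps_Suc(1) by (rule incseq_SucI)
  ultimately show ?thesis
    by (intro that[of Ps] Ps(1,3)) force+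
qed

lemma bilipschitz_matching:
  fixes D E :: "real set"
  assumes "K > 1" "countable D" "countable E" "closure D = {0..1}" "closure E = {0..1}"
    and "0 \<in> D" "1 \<in> D" "0 \<in> E" "1 \<in> E"
  obtains R where "fst ` R = D" "snd ` R = E" "(0, 0) \<in> R" "(1, 1) \<in> R" "bilipschitz_graph K R"
proof -
  define good where "good P \<longleftrightarrow> finite P \<and> (0, 0) \<in> P \<and> (1, 1) \<in> P \<and> bilipschitz_graph K P"
    for P :: "(real \<times> real) set"
  have good_swap: "good (prod.swap ` P) \<longleftrightarrow> good P" for P
  proof -
    have "finite (prod.swap ` P) \<longleftrightarrow> finite P"
      by (simp add: finite_image_iff)
    moreover have "(0, 0) \<in> prod.swap ` P \<longleftrightarrow> (0, 0) \<in> P" "(1, 1) \<in> prod.swap ` P \<longleftrightarrow> (1, 1) \<in> P"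
      by simp_all
    ultimately show ?thesis
      using bilipschitz_graph_swap[of K P] \<open>K > 1\<close> by (simp add: good_def)
  qed
  have extend: "\<exists>y\<in>B. good (insert (x, y) P)"
    if P: "good P" "P \<subseteq> A \<times> B" and "x \<in> A" "closure A = {0..1}" "closure B = {0..1}" for A B P x
  proof (cases "x \<in> fst ` P")
    case True
    then obtain y where "(x, y) \<in> P" by force
    moreover from this have "y \<in> B" using P by blast
    ultimately show ?thesis using P by (metis insert_absorb)
  next
    case False
    have "x \<in> {0..1}" using closure_subset \<open>x \<in> A\<close> \<open>closure A = {0..1}\<close> by blast
    moreover have "x \<noteq> 0" "x \<noteq> 1" using False \<open>good P\<close> by (force simp: good_def)+
    ultimately have "0 < x" "x < 1" by auto
    then obtain y where "y \<in> B" "bilipschitz_graph K (insert (x, y) P)"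
      using bilipschitz_graph_insert[of K P x B] False P \<open>K > 1\<close> \<open>closure B = {0..1}\<close>
      unfolding good_def by auto
    then show ?thesis using P unfolding good_def by auto
  qed
  have "good {(0, 0), (1, 1)}"
    using \<open>K > 1\<close> by (auto simp: good_def bilipschitz_graph_def field_simps)
  obtain Ps where Ps: "\<And>n. good (Ps n)" "Ps 0 = {(0, 0), (1, 1)}" "incseq Ps"
    "fst ` (\<Union>n. Ps n) = D" "snd ` (\<Union>n. Ps n) = E"
  proof (rule back_and_forth[where good = good])
    show "good {(0, 0), (1, 1)}" by fact
    show "{(0, 0), (1, 1)} \<subseteq> D \<times> E" using assms by simp
    show "D \<noteq> {}" "E \<noteq> {}" using assms by auto
    show "\<exists>y\<in>E. good (insert (x, y) P)" if "good P" "P \<subseteq> D \<times> E" "x \<in> D" for P x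
      using extend[OF that] assms(4,5) .
    show "\<exists>x\<in>D. good (insert (x, y) P)" if P: "good P" "P \<subseteq> D \<times> E" "y \<in> E" for P y
    proof -
      have "good (prod.swap ` P)" "prod.swap ` P \<subseteq> E \<times> D"
        using P good_swap by auto
      then obtain x where "x \<in> D" "good (insert (y, x) (prod.swap ` P))"
        using extend[of "prod.swap ` P" E D y] P(3) assms(4,5) by blast
      then show ?thesis
        using good_swap[of "insert (x, y) P"] by auto
    qed
  qed (use assms in auto)
  have "bilipschitz_graph K (\<Union>n. Ps n)"
    unfolding bilipschitz_graph_def
  proof (clarify)
    fix a a' b b' i j assume "(a, a') \<in> Ps i" "(b, b') \<in> Ps j" "a < b \<or> a' < b'"
    then have "(a, a') \<in> Ps (max i j)" "(b, b') \<in> Ps (max i j)"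
      using monoD[OF \<open>incseq Ps\<close>, of i "max i j"] monoD[OF \<open>incseq Ps\<close>, of j "max i j"] by auto
    then show "(b - a) / K < b' - a' \<and> b' - a' < K * (b - a)"
      using Ps(1)[of "max i j"] \<open>a < b \<or> a' < b'\<close> unfolding good_def bilipschitz_graph_def by fastforce
  qed
  moreover have "(0, 0) \<in> (\<Union>n. Ps n)" "(1, 1) \<in> (\<Union>n. Ps n)"
    using Ps(2) by blast+
  ultimately show ?thesis
    using that Ps(4,5) by blast
qed

section \<open>Increasing bi-Lipschitz maps of an interval\<close>

definition increasing_bilipschitz_on :: "real \<Rightarrow> real set \<Rightarrow> (real \<Rightarrow> real) \<Rightarrow> bool" where
  "increasing_bilipschitz_on K S h \<longleftrightarrow>
     (\<forall>x\<in>S. \<forall>y\<in>S. x \<le> y \<longrightarrow> (y - x) / K \<le> h y - h x \<and> h y - h x \<le> K * (y - x))"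

lemma increasing_bilipschitz_onD:
  assumes "increasing_bilipschitz_on K S h" "x \<in> S" "y \<in> S" "x \<le> y"
  shows "(y - x) / K \<le> h y - h x" "h y - h x \<le> K * (y - x)"
  using assms unfolding increasing_bilipschitz_on_def by auto

text \<open>Multiplied by \<open>y - x\<close>, the bounds become symmetric in \<open>x\<close> and \<open>y\<close>; in this form they pass
  to the closure of \<open>S \<times> S\<close>.\<close>

lemma increasing_bilipschitz_on_iff_products:
  "increasing_bilipschitz_on K S h \<longleftrightarrow>
     (\<forall>x\<in>S. \<forall>y\<in>S. (y - x)\<^sup>2 / K \<le> (h y - h x) * (y - x) \<and> (h y - h x) * (y - x) \<le> K * (y - x)\<^sup>2)"
    (is "_ \<longleftrightarrow> (\<forall>x\<in>S. \<forall>y\<in>S. ?prod x y)")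
proof -
  have bound_iff_prod: "(y - x) / K \<le> h y - h x \<and> h y - h x \<le> K * (y - x) \<longleftrightarrow> ?prod x y"
    if "x < y" for x y
    using that by (simp add: power2_eq_square mult_le_cancel_right flip: times_divide_eq_left mult.assoc)
  have prod_sym: "?prod x y \<longleftrightarrow> ?prod y x" for x y
    by (simp add: power2_commute algebra_simps)
  show ?thesis
    unfolding increasing_bilipschitz_on_def
  proof (intro iffI ballI impI)
    fix x y assume bounds: "\<forall>x\<in>S. \<forall>y\<in>S. x \<le> y \<longrightarrow> (y - x) / K \<le> h y - h x \<and> h y - h x \<le> K * (y - x)"
      and "x \<in> S" "y \<in> S"
    then show "?prod x y"
      using bound_iff_prod[of x y] bound_iff_prod[of y x] prod_sym[of x y]
      by (cases x y rule: linorder_cases) auto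
  next
    fix x y assume "\<forall>x\<in>S. \<forall>y\<in>S. ?prod x y" "x \<in> S" "y \<in> S" "x \<le> y"
    then show "(y - x) / K \<le> h y - h x \<and> h y - h x \<le> K * (y - x)"
      using bound_iff_prod[of x y] by (cases "x = y") auto
  qed
qed

lemma increasing_bilipschitz_on_closure:
  assumes h: "increasing_bilipschitz_on K S h" and cont: "continuous_on (closure S) h"
  shows "increasing_bilipschitz_on K (closure S) h"
proof -
  define lower where "lower p = (h (snd p) - h (fst p)) * (snd p - fst p) - (snd p - fst p)\<^sup>2 / K" for p
  define upper where "upper p = K * (snd p - fst p)\<^sup>2 - (h (snd p) - h (fst p)) * (snd p - fst p)" for p
  have h_fst: "continuous_on (closure S \<times> closure S) (\<lambda>p. h (fst p))"
    by (rule continuous_on_compose2[OF cont continuous_on_fst[OF continuous_on_id]]) auto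
  have h_snd: "continuous_on (closure S \<times> closure S) (\<lambda>p. h (snd p))"
    by (rule continuous_on_compose2[OF cont continuous_on_snd[OF continuous_on_id]]) auto
  have "continuous_on (closure (S \<times> S)) lower"
    unfolding lower_def closure_Times divide_inverse by (intro continuous_intros h_fst h_snd)
  moreover have "continuous_on (closure (S \<times> S)) upper"
    unfolding upper_def closure_Times by (intro continuous_intros h_fst h_snd)
  moreover have "lower p \<ge> 0" "upper p \<ge> 0" if "p \<in> S \<times> S" for p
    using h that unfolding increasing_bilipschitz_on_iff_products lower_def upper_def by auto
  ultimately have "lower p \<ge> 0 \<and> upper p \<ge> 0" if "p \<in> closure (S \<times> S)" for p
    using that continuous_ge_on_closure by metis
  then show ?thesis
    unfolding increasing_bilipschitz_on_iff_products closure_Times lower_def upper_def by auto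
qed

lemma increasing_bilipschitz_on_lipschitz:
  assumes h: "increasing_bilipschitz_on K S h" and "K > 0"
  shows "K-lipschitz_on S h"
proof -
  have "\<bar>h y - h x\<bar> \<le> K * \<bar>y - x\<bar>" if "x \<in> S" "y \<in> S" "x \<le> y" for x y
  proof -
    have "0 \<le> (y - x) / K" using that \<open>K > 0\<close> by simp
    then show ?thesis using increasing_bilipschitz_onD[OF h that] that(3) by simp
  qed
  then have "dist (h x) (h y) \<le> K * dist x y" if "x \<in> S" "y \<in> S" for x y
    using that by (cases "x \<le> y") (force simp: dist_real_def abs_minus_commute)+
  then show ?thesis using \<open>K > 0\<close> by (intro lipschitz_onI) auto
qed

lemma bilipschitz_graph_extend_closure:
  assumes "K > 0" and R: "bilipschitz_graph K R"
  obtains h where "\<And>x y. (x, y) \<in> R \<Longrightarrow> h x = y" "increasing_bilipschitz_on K (closure (fst ` R)) h"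
proof -
  define g where "g x = (THE y. (x, y) \<in> R)" for x
  have g: "g x = y" if "(x, y) \<in> R" for x y
    unfolding g_def
  proof (rule the_equality)
    fix y' assume "(x, y') \<in> R"
    then show "y' = y"
      using bilipschitz_graphD(2)[OF R that \<open>(x, y') \<in> R\<close>] bilipschitz_graphD(2)[OF R \<open>(x, y') \<in> R\<close> that]
      by simp
  qed (fact that)
  have g_bilip: "increasing_bilipschitz_on K (fst ` R) g"
    unfolding increasing_bilipschitz_on_def
    using bilipschitz_graphD[OF R] g by force
  obtain h where h_lip: "K-lipschitz_on (closure (fst ` R)) h" and h_g: "\<And>x. x \<in> fst ` R \<Longrightarrow> h x = g x"
    using lipschitz_extend_closure[OF increasing_bilipschitz_on_lipschitz[OF g_bilip \<open>K > 0\<close>]] by blast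
  have "increasing_bilipschitz_on K (fst ` R) h"
    using g_bilip h_g unfolding increasing_bilipschitz_on_def by simp
  then have "increasing_bilipschitz_on K (closure (fst ` R)) h"
    using increasing_bilipschitz_on_closure lipschitz_on_continuous_on[OF h_lip] by blast
  moreover have "h x = y" if "(x, y) \<in> R" for x y
    using that g h_g by force
  ultimately show ?thesis using that by blast
qed

lemma increasing_bilipschitz_unit_interval_ge_1:
  assumes "increasing_bilipschitz_on K {0..1} h" "h 0 = 0" "h 1 = 1"
  shows "1 \<le> K"
  using increasing_bilipschitz_onD(2)[OF assms(1), of 0 1] assms(2,3) by simp

lemma increasing_bilipschitz_unit_interval_onto:
  assumes h: "increasing_bilipschitz_on K {0..1} h" and "h 0 = 0" "h 1 = 1"
  shows "h ` {0..1} = {0..1}"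
proof
  have "K > 0" using increasing_bilipschitz_unit_interval_ge_1[OF assms] by simp
  show "h ` {0..1} \<subseteq> {0..1}"
  proof clarify
    fix s :: real assume "s \<in> {0..1}"
    then have "0 \<le> s / K" "0 \<le> (1 - s) / K" using \<open>K > 0\<close> by auto
    then show "h s \<in> {0..1}"
      using increasing_bilipschitz_onD(1)[OF h, of 0 s] increasing_bilipschitz_onD(1)[OF h, of s 1]
        \<open>s \<in> {0..1}\<close> assms(2,3) by auto
  qed
  have "continuous_on {0..1} h"
    using lipschitz_on_continuous_on[OF increasing_bilipschitz_on_lipschitz[OF h \<open>K > 0\<close>]] .
  then show "{0..1} \<subseteq> h ` {0..1}"
    using IVT'[of h 0 _ 1] assms(2,3) by (force simp: image_iff)
qed

section \<open>The induced map of the circle\<close>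

lemma sin_ge_half:
  fixes v :: real
  assumes "0 \<le> v" "v \<le> pi / 2"
  shows "v / 2 \<le> sin v"
proof -
  have "\<bar>sin v - (\<Sum>m<3. sin_coeff m * v ^ m)\<bar> \<le> inverse (fact 3) * \<bar>v\<bar> ^ 3"
    by (rule Maclaurin_sin_bound)
  moreover have "(\<Sum>m<3. sin_coeff m * v ^ m) = v"
    by (simp add: eval_nat_numeral sin_coeff_def)
  ultimately have "v - v ^ 3 / 6 \<le> sin v"
    using assms by (simp add: eval_nat_numeral abs_if split: if_splits)
  moreover have "v\<^sup>2 \<le> 3"
  proof -
    have "v \<le> 1.6" using assms pi_approx by simp
    then have "v\<^sup>2 \<le> 1.6\<^sup>2" using assms by (intro power_mono) auto
    then show ?thesis by (simp add: power2_eq_square)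
  qed
  then have "v ^ 3 / 6 \<le> v / 2"
    using mult_left_mono[of "v\<^sup>2" 3 v] assms by (simp add: power2_eq_square power3_eq_cube)
  ultimately show ?thesis by linarith
qed

lemma dist_cis: "dist (cis a) (cis b) = 2 * \<bar>sin ((a - b) / 2)\<bar>"
proof -
  have "2 * ((a - b) / 2) = a - b" by simp
  have "cis a - cis b = cis b * (cis (a - b) - 1)"
    by (simp add: algebra_simps cis_mult)
  then have "dist (cis a) (cis b) = norm (cis (a - b) - 1)"
    by (simp add: dist_norm norm_mult)
  also have "\<dots> = sqrt ((cos (a - b) - 1)\<^sup>2 + (sin (a - b))\<^sup>2)"
    by (simp add: cmod_def)
  also have "(cos (a - b) - 1)\<^sup>2 + (sin (a - b))\<^sup>2 = 2 - 2 * cos (a - b)"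
    by (simp add: power2_diff sin_squared_eq algebra_simps power2_eq_square)
  also have "cos (a - b) = 1 - 2 * (sin ((a - b) / 2))\<^sup>2"
    by (metis cos_double_sin \<open>2 * ((a - b) / 2) = a - b\<close>)
  also have "2 - 2 * (1 - 2 * (sin ((a - b) / 2))\<^sup>2) = (2 * sin ((a - b) / 2))\<^sup>2"
    by (simp add: algebra_simps power2_eq_square)
  also have "sqrt \<dots> = \<bar>2 * sin ((a - b) / 2)\<bar>"
    by (rule real_sqrt_abs)
  finally show ?thesis by (simp add: abs_mult)
qed

text \<open>For \<open>s, t \<in> {0..1}\<close> this is the distance from \<open>s - t\<close> to the nearest integer, i.e. the
  length of the shorter arc between \<open>cis (2 * pi * s)\<close> and \<open>cis (2 * pi * t)\<close> divided by \<open>2 * pi\<close>.\<close>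

definition arc_dist :: "real \<Rightarrow> real \<Rightarrow> real" where
  "arc_dist s t = min \<bar>s - t\<bar> (1 - \<bar>s - t\<bar>)"

lemma arc_dist_commute: "arc_dist s t = arc_dist t s"
  by (simp add: arc_dist_def abs_minus_commute)

lemma dist_cis_arc_dist:
  assumes "s \<in> {0..1}" "t \<in> {0..1}"
  shows "pi * arc_dist s t \<le> dist (cis (2 * pi * s)) (cis (2 * pi * t))"
    and "dist (cis (2 * pi * s)) (cis (2 * pi * t)) \<le> 2 * pi * arc_dist s t"
proof -
  define u where "u = \<bar>s - t\<bar>"
  have "0 \<le> u" "u \<le> 1" using assms by (auto simp: u_def)
  have "\<bar>sin (pi * (s - t))\<bar> = \<bar>sin (pi * u)\<bar>"
  proof (cases "s \<le> t")
    case True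
    then have "pi * (s - t) = - (pi * u)" by (simp add: u_def algebra_simps)
    then show ?thesis by (simp only: sin_minus abs_minus_cancel)
  qed (simp add: u_def)
  also have "\<dots> = sin (pi * u)"
    using \<open>0 \<le> u\<close> \<open>u \<le> 1\<close> by (intro abs_of_nonneg sin_ge_zero) auto
  also have "\<dots> = sin (pi * arc_dist s t)"
  proof (cases "u \<le> 1 - u")
    case False
    then have "pi * arc_dist s t = pi - pi * u"
      by (simp add: arc_dist_def u_def[symmetric] right_diff_distrib)
    then show ?thesis by (simp only: sin_pi_minus)
  qed (simp add: arc_dist_def u_def)
  finally have dist_eq: "dist (cis (2 * pi * s)) (cis (2 * pi * t)) = 2 * sin (pi * arc_dist s t)"
    by (simp add: dist_cis right_diff_distrib[symmetric])
  have "0 \<le> arc_dist s t" "arc_dist s t \<le> 1 / 2"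
    using \<open>0 \<le> u\<close> \<open>u \<le> 1\<close> by (auto simp: arc_dist_def u_def[symmetric] min_def)
  then have "0 \<le> pi * arc_dist s t" "pi * arc_dist s t \<le> pi / 2"
    using mult_left_mono[of "arc_dist s t" "1 / 2" pi] by simp_all
  then show "pi * arc_dist s t \<le> dist (cis (2 * pi * s)) (cis (2 * pi * t))"
    and "dist (cis (2 * pi * s)) (cis (2 * pi * t)) \<le> 2 * pi * arc_dist s t"
    using sin_ge_half sin_x_le_x by (force simp: dist_eq)+
qed

lemma arc_dist_increasing_bilipschitz:
  assumes h: "increasing_bilipschitz_on K {0..1} h" and "h 0 = 0" "h 1 = 1"
    and "s \<in> {0..1}" "t \<in> {0..1}"
  shows "arc_dist (h s) (h t) \<le> K * arc_dist s t" "arc_dist s t \<le> K * arc_dist (h s) (h t)"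
proof -
  have "arc_dist (h s) (h t) \<le> K * arc_dist s t \<and> arc_dist s t \<le> K * arc_dist (h s) (h t)"
    if "s \<in> {0..1}" "t \<in> {0..1}" "s \<le> t" for s t
  proof -
    note bounds = increasing_bilipschitz_onD[OF h]
    have "K > 0"
      using increasing_bilipschitz_unit_interval_ge_1[OF h assms(2,3)] by simp
    then have "t - s \<le> K * (h t - h s)" "h t - h s \<le> K * (t - s)"
      "s \<le> K * h s" "h s \<le> K * s" "1 - t \<le> K * (1 - h t)" "1 - h t \<le> K * (1 - t)"
      using bounds[of s t] bounds[of 0 s] bounds[of t 1] that assms(2,3) by (simp_all add: field_simps)
    moreover have "0 \<le> K * (h t - h s)"
      using \<open>t - s \<le> K * (h t - h s)\<close> that(3) by linarith
    then have "h s \<le> h t"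
      using \<open>K > 0\<close> by (simp add: zero_le_mult_iff)
    ultimately show ?thesis
      using that unfolding arc_dist_def by (auto simp: abs_if min_def right_diff_distrib)
  qed
  then show "arc_dist (h s) (h t) \<le> K * arc_dist s t" "arc_dist s t \<le> K * arc_dist (h s) (h t)"
    using assms(4,5) arc_dist_commute by (cases "s \<le> t"; fastforce)+
qed

lemma Arg2pi_cis:
  assumes "s \<in> {0..<1}"
  shows "Arg2pi (cis (2 * pi * s)) = 2 * pi * s"
  using assms by (intro Arg2pi_unique[of 1]) (auto simp: cis_conv_exp)

lemma circle_eq_cis_image: "circle = (\<lambda>s. cis (2 * pi * s)) ` {0..<1}"
proof
  show "circle \<subseteq> (\<lambda>s. cis (2 * pi * s)) ` {0..<1}"
  proof
    fix z assume "z \<in> circle"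
    then have "z = cis (Arg2pi z)"
      using Arg2pi[of z] by (simp add: circle_def is_Arg_def cis_conv_exp dist_norm)
    moreover have "Arg2pi z / (2 * pi) \<in> {0..<1}"
      using Arg2pi[of z] by simp
    ultimately show "z \<in> (\<lambda>s. cis (2 * pi * s)) ` {0..<1}"
      by (intro image_eqI[of _ _ "Arg2pi z / (2 * pi)"]) auto
  qed
qed (auto simp: circle_def dist_norm)

lemma circle_eq_cis_image_closed: "circle = (\<lambda>s. cis (2 * pi * s)) ` {0..1}"
proof -
  have "cis (2 * pi * 1) \<in> (\<lambda>s. cis (2 * pi * s)) ` {0..<1}"
    by (rule image_eqI[of _ _ 0]) auto
  moreover have "{0..1} = insert 1 {0..<1::real}"
    by auto
  ultimately show ?thesis
    by (simp add: circle_eq_cis_image insert_absorb)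
qed

definition circle_map :: "(real \<Rightarrow> real) \<Rightarrow> complex \<Rightarrow> complex" where
  "circle_map h z = cis (2 * pi * h (Arg2pi z / (2 * pi)))"

lemma circle_map_cis:
  assumes "h 0 = 0" "h 1 = 1" "s \<in> {0..1}"
  shows "circle_map h (cis (2 * pi * s)) = cis (2 * pi * h s)"
proof (cases "s = 1")
  case True
  then have "circle_map h (cis (2 * pi * s)) = circle_map h (cis (2 * pi * 0))" by simp
  then show ?thesis using True assms Arg2pi_cis[of 0] by (simp add: circle_map_def)
qed (use assms Arg2pi_cis[of s] in \<open>simp add: circle_map_def\<close>)

lemma circle_map_cis_image:
  assumes "h 0 = 0" "h 1 = 1" "A \<subseteq> {0..1}"
  shows "circle_map h ` (\<lambda>s. cis (2 * pi * s)) ` A = (\<lambda>s. cis (2 * pi * s)) ` h ` A"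
  unfolding image_image using assms circle_map_cis by (intro image_cong) auto

lemma circle_map_bilipschitz:
  assumes h: "increasing_bilipschitz_on K {0..1} h" and "h 0 = 0" "h 1 = 1"
    and "z \<in> circle" "w \<in> circle"
  shows "dist (circle_map h z) (circle_map h w) \<le> 2 * K * dist z w"
    and "dist z w \<le> 2 * K * dist (circle_map h z) (circle_map h w)"
proof -
  obtain s t where st: "s \<in> {0..1}" "t \<in> {0..1}" and zw: "z = cis (2 * pi * s)" "w = cis (2 * pi * t)"
    using assms(4,5) unfolding circle_eq_cis_image_closed by blast
  have hst: "h s \<in> {0..1}" "h t \<in> {0..1}"
    using increasing_bilipschitz_unit_interval_onto[OF h assms(2,3)] st by auto
  have fzw: "circle_map h z = cis (2 * pi * h s)" "circle_map h w = cis (2 * pi * h t)"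
    unfolding zw using circle_map_cis[OF assms(2,3)] st by simp_all
  note arc = arc_dist_increasing_bilipschitz[OF h assms(2,3) st]
  note chord = dist_cis_arc_dist[OF st] dist_cis_arc_dist[OF hst]
  have "K \<ge> 0" using increasing_bilipschitz_unit_interval_ge_1[OF h assms(2,3)] by simp
  have "dist (circle_map h z) (circle_map h w) \<le> 2 * pi * arc_dist (h s) (h t)"
    unfolding fzw by (fact chord(4))
  also have "\<dots> \<le> 2 * pi * (K * arc_dist s t)"
    using arc(1) by simp
  also have "\<dots> = 2 * K * (pi * arc_dist s t)"
    by simp
  also have "\<dots> \<le> 2 * K * dist z w"
    unfolding zw using chord(1) \<open>K \<ge> 0\<close> by (intro mult_left_mono) auto
  finally show "dist (circle_map h z) (circle_map h w) \<le> 2 * K * dist z w" .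
  have "dist z w \<le> 2 * pi * arc_dist s t"
    unfolding zw by (fact chord(2))
  also have "\<dots> \<le> 2 * pi * (K * arc_dist (h s) (h t))"
    using arc(2) by simp
  also have "\<dots> = 2 * K * (pi * arc_dist (h s) (h t))"
    by simp
  also have "\<dots> \<le> 2 * K * dist (circle_map h z) (circle_map h w)"
    unfolding fzw using chord(3) \<open>K \<ge> 0\<close> by (intro mult_left_mono) auto
  finally show "dist z w \<le> 2 * K * dist (circle_map h z) (circle_map h w)" .
qed

lemma circle_map_homeomorphism:
  assumes h: "increasing_bilipschitz_on K {0..1} h" and "h 0 = 0" "h 1 = 1"
  shows "\<exists>\<psi>. homeomorphism circle circle (circle_map h) \<psi>"
proof (rule homeomorphism_compact)
  show "compact circle" by (simp add: circle_def)
  have "K \<ge> 0" using increasing_bilipschitz_unit_interval_ge_1[OF assms] by simp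
  then have "(2 * K)-lipschitz_on circle (circle_map h)"
    using circle_map_bilipschitz(1)[OF assms] by (intro lipschitz_onI) auto
  then show "continuous_on circle (circle_map h)"
    by (rule lipschitz_on_continuous_on)
  show "inj_on (circle_map h) circle"
    using circle_map_bilipschitz(2)[OF assms] by (intro inj_onI) fastforce
  show "circle_map h ` circle = circle"
    unfolding circle_eq_cis_image_closed circle_map_cis_image[OF assms(2,3) order_refl]
      increasing_bilipschitz_unit_interval_onto[OF assms] ..
qed

lemma control_function_linear:
  assumes "c > 0"
  shows "control_function (\<lambda>t. c * t)"
  unfolding control_function_def homeomorphism_def
proof (intro exI[of _ "\<lambda>t. t / c"] conjI)
  show "(\<lambda>t. c * t) ` {0..} = {0..}"
  proof
    show "{0..} \<subseteq> (\<lambda>t. c * t) ` {0..}"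
      using assms by (auto intro!: image_eqI[where x = "_ / c"])
  qed (use assms in auto)
  show "(\<lambda>t. t / c) ` {0..} = {0..}"
  proof
    show "{0..} \<subseteq> (\<lambda>t. t / c) ` {0..}"
      using assms by (auto intro!: image_eqI[where x = "c * _"])
  qed (use assms in auto)
qed (use assms in \<open>auto intro!: continuous_intros\<close>)

lemma bilipschitz_imp_quasisymmetric_on:
  assumes "L > 0"
    and upper: "\<And>x y. x \<in> S \<Longrightarrow> y \<in> S \<Longrightarrow> dist (f x) (f y) \<le> L * dist x y"
    and lower: "\<And>x y. x \<in> S \<Longrightarrow> y \<in> S \<Longrightarrow> dist x y \<le> L * dist (f x) (f y)"
  shows "quasisymmetric_on S f"
  unfolding quasisymmetric_on_def
proof (intro exI[of _ "\<lambda>t. L\<^sup>2 * t"] conjI control_function_linear ballI allI impI)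
  fix x a b and t :: real
  assume xab: "x \<in> S" "a \<in> S" "b \<in> S" and "t \<ge> 0" and "dist x a \<le> t * dist x b"
  have "dist (f x) (f a) \<le> L * dist x a"
    using upper[OF xab(1,2)] .
  also have "\<dots> \<le> L * (t * dist x b)"
    using \<open>dist x a \<le> t * dist x b\<close> \<open>L > 0\<close> by simp
  also have "\<dots> \<le> L * (t * (L * dist (f x) (f b)))"
    using lower[OF xab(1,3)] \<open>t \<ge> 0\<close> \<open>L > 0\<close> by (simp add: mult_left_mono)
  finally show "dist (f x) (f a) \<le> L\<^sup>2 * t * dist (f x) (f b)"
    by (simp add: power2_eq_square algebra_simps)
qed (use \<open>L > 0\<close> in simp)

lemma circle_map_quasisymmetric:
  assumes h: "increasing_bilipschitz_on K {0..1} h" and "h 0 = 0" "h 1 = 1"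
  shows "quasisymmetric_on circle (circle_map h)"
  using increasing_bilipschitz_unit_interval_ge_1[OF assms] circle_map_bilipschitz[OF assms]
  by (intro bilipschitz_imp_quasisymmetric_on[of "2 * K"]) auto

section \<open>Adic fractions\<close>

definition adic_fractions :: "nat \<Rightarrow> real set" where
  "adic_fractions b = {real p / real b ^ n | p n. p \<le> b ^ n}"

lemma countable_adic_fractions: "countable (adic_fractions b)"
proof -
  have "adic_fractions b \<subseteq> (\<lambda>(p, n). real p / real b ^ n) ` UNIV"
    unfolding adic_fractions_def by auto
  then show ?thesis by (rule countable_subset) simp
qed

lemma adic_fractions_0_1: "0 \<in> adic_fractions b" "1 \<in> adic_fractions b"
proof -
  have "0 = real 0 / real b ^ 0 \<and> 0 \<le> b ^ 0" "1 = real 1 / real b ^ 0 \<and> 1 \<le> b ^ 0"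
    by simp_all
  then show "0 \<in> adic_fractions b" "1 \<in> adic_fractions b"
    unfolding adic_fractions_def by blast+
qed

lemma adic_fractions_subset: "adic_fractions b \<subseteq> {0..1}"
  unfolding adic_fractions_def by (auto simp: divide_le_eq_1 simp flip: of_nat_power)

lemma closure_adic_fractions:
  assumes "b \<ge> 2"
  shows "closure (adic_fractions b) = {0..1}"
proof
  show "closure (adic_fractions b) \<subseteq> {0..1}"
    using adic_fractions_subset by (simp add: closure_minimal)
  show "{0..1} \<subseteq> closure (adic_fractions b)"
  proof (clarsimp simp: closure_approachable)
    fix x \<epsilon> :: real assume "0 \<le> x" "x \<le> 1" "\<epsilon> > 0"
    obtain n where n: "1 / \<epsilon> < real b ^ n"
      using real_arch_pow[of "real b" "1 / \<epsilon>"] assms by auto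
    define p where "p = nat \<lfloor>x * real b ^ n\<rfloor>"
    have "real b ^ n > 0" using assms by simp
    have "real p \<le> x * real b ^ n" "x * real b ^ n < real p + 1"
      using \<open>0 \<le> x\<close> by (simp_all add: p_def)
    then have "real p / real b ^ n \<le> x" "x < (real p + 1) / real b ^ n"
      using \<open>real b ^ n > 0\<close> by (simp_all add: pos_divide_le_eq pos_less_divide_eq)
    then have "real p / real b ^ n \<le> x" "x - 1 / real b ^ n < real p / real b ^ n"
      by (simp_all add: add_divide_distrib)
    moreover have "1 / real b ^ n < \<epsilon>"
      using n \<open>\<epsilon> > 0\<close> \<open>real b ^ n > 0\<close> by (simp add: pos_divide_less_eq mult.commute)
    ultimately have "dist (real p / real b ^ n) x < \<epsilon>"
      by (simp add: dist_real_def)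
    moreover have "x * real b ^ n \<le> real b ^ n"
      using mult_left_le_one_le[of "real b ^ n" x] \<open>0 \<le> x\<close> \<open>x \<le> 1\<close> by simp
    then have "real p \<le> real b ^ n"
      using \<open>real p \<le> x * real b ^ n\<close> by linarith
    then have "real p / real b ^ n \<in> adic_fractions b"
      unfolding adic_fractions_def by (auto simp flip: of_nat_power)
    ultimately show "\<exists>y\<in>adic_fractions b. dist y x < \<epsilon>"
      by blast
  qed
qed

lemma adic_points_eq_cis_image:
  assumes "b \<ge> 1"
  shows "adic_points b = (\<lambda>s. cis (2 * pi * s)) ` adic_fractions b"
proof
  show "(\<lambda>s. cis (2 * pi * s)) ` adic_fractions b \<subseteq> adic_points b"
    unfolding adic_fractions_def adic_points_def by blast
  show "adic_points b \<subseteq> (\<lambda>s. cis (2 * pi * s)) ` adic_fractions b"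
  proof
    fix z assume "z \<in> adic_points b"
    then obtain p n where z: "z = cis (2 * pi * (real p / real b ^ n))"
      unfolding adic_points_def by auto
    define k where "k = p div b ^ n"
    define q where "q = p mod b ^ n"
    have "real p / real b ^ n = real k + real q / real b ^ n"
      using assms by (simp add: k_def q_def field_simps flip: of_nat_power of_nat_mult of_nat_add)
    then have "z = cis (2 * pi * real k) * cis (2 * pi * (real q / real b ^ n))"
      unfolding z by (simp only: distrib_left cis_mult)
    also have "cis (2 * pi * real k) = 1"
      by (rule cis_multiple_2pi) simp
    finally have "z = cis (2 * pi * (real q / real b ^ n))" by simp
    moreover have "q \<le> b ^ n"
      using assms by (simp add: q_def order.strict_implies_order)
    ultimately show "z \<in> (\<lambda>s. cis (2 * pi * s)) ` adic_fractions b"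
      unfolding adic_fractions_def by blast
  qed
qed

theorem proposition3p4:
  fixes d e :: nat
  assumes "d \<ge> 2" and "e \<ge> 2"
  shows "\<exists>\<phi> \<psi>. homeomorphism circle circle \<phi> \<psi> \<and> quasisymmetric_on circle \<phi> \<and>
           \<phi> ` adic_points d = adic_points e"
proof -
  obtain R where R: "fst ` R = adic_fractions d" "snd ` R = adic_fractions e" "(0, 0) \<in> R" "(1, 1) \<in> R"
    and "bilipschitz_graph 2 R"
    using bilipschitz_matching[of 2 "adic_fractions d" "adic_fractions e"]
      countable_adic_fractions closure_adic_fractions[OF assms(1)] closure_adic_fractions[OF assms(2)]
      adic_fractions_0_1
    by auto
  then obtain h where h_R: "\<And>x y. (x, y) \<in> R \<Longrightarrow> h x = y" and h: "increasing_bilipschitz_on 2 {0..1} h"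
    using bilipschitz_graph_extend_closure[of 2 R] closure_adic_fractions[OF assms(1)] by auto
  have h01: "h 0 = 0" "h 1 = 1"
    using h_R R(3,4) by auto
  have "h ` adic_fractions d = adic_fractions e"
    unfolding R(1,2)[symmetric] image_comp using h_R by (intro image_cong) auto
  then have "circle_map h ` adic_points d = adic_points e"
    using assms adic_points_eq_cis_image circle_map_cis_image[OF h01 adic_fractions_subset] by simp
  then show ?thesis
    using circle_map_homeomorphism[OF h h01] circle_map_quasisymmetric[OF h h01] by blast
qed

end
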